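(* Let $\eta\in\mathbb{R}$, $h>0$, $x_0\in\mathbb{R}$, and let $(\Delta W_n)_{n\ge0}$ be i.i.d. $\mathcal{N}(0,h)$ random variables. For $f(x)=-x$, $g(x)=1+\eta x$ and $F(x)=f(x)-\tfrac12g'(x)g(x)=-x-\tfrac12\eta(1+\eta x)$, define the stochastic Heun iterates $$x_{n+1}=x_n+\tfrac12(F_1+F_2)h+\tfrac12(G_1+G_2)\Delta W_n,$$ where $F_1=F(x_n)$, $G_1=g(x_n)$, $F_2=F(x_n+F_1h+G_1\Delta W_n)$, $G_2=g(x_n+F_1h+G_1\Delta W_n)$, starting from the deterministic value $x_0$. Let $\mu^{(1)}_n=\mathbb{E}[x_n]$. Then $$\mu^{(1)}_{n+1}=\Big(1-h+\tfrac18h^2(2+\eta^2)^2\Big)\mu^{(1)}_n+\tfrac18\eta h^2(2+\eta^2).$$ Consequently, if $0<h<\dfrac{8}{(2+\eta^2)^2}$, then $$\mu^{(1)}_n\to\frac{\frac18\eta h(2+\eta^2)}{1-\frac18h(2+\eta^2)^2}\quad(n\to\infty),$$ which is $O(h)$ as $h\to0$.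
   Context: Here $\Delta W_n$ is independent of $x_0,\dots,x_n$. *)

theory Defs
  imports "HOL-Probability.Probability"
begin

definition heun_f :: "real \<Rightarrow> real" where
  "heun_f x = - x"

definition heun_g :: "real \<Rightarrow> real \<Rightarrow> real" where
  "heun_g eta x = 1 + eta * x"

definition heun_F :: "real \<Rightarrow> real \<Rightarrow> real" where
  "heun_F eta x = heun_f x - 1/2 * deriv (heun_g eta) x * heun_g eta x"

definition heun_step :: "real \<Rightarrow> real \<Rightarrow> real \<Rightarrow> real \<Rightarrow> real" where
  "heun_step eta h x w =
     (let F1 = heun_F eta x; G1 = heun_g eta x;
          y = x + F1 * h + G1 * w;
          F2 = heun_F eta y; G2 = heun_g eta y
      in x + 1/2 * (F1 + F2) * h + 1/2 * (G1 + G2) * w)"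

fun heun_iter :: "real \<Rightarrow> real \<Rightarrow> real \<Rightarrow> (nat \<Rightarrow> 'a \<Rightarrow> real) \<Rightarrow> nat \<Rightarrow> 'a \<Rightarrow> real" where
  "heun_iter eta h x0 dW 0 \<omega> = x0"
| "heun_iter eta h x0 dW (Suc n) \<omega> = heun_step eta h (heun_iter eta h x0 dW n \<omega>) (dW n \<omega>)"

end

theory Submission
  imports Defs
begin

text \<open>One Heun step is a quadratic polynomial in the Brownian increment \<open>w\<close> whose coefficients
  are affine in the current state \<open>x\<close>. The state \<open>x\<^sub>n\<close> depends only on the increments before step
  \<open>n\<close>, hence is independent of \<open>\<Delta>W\<^sub>n\<close>, and taking expectations with \<open>E \<Delta>W\<^sub>n = 0\<close>,
  \<open>E \<Delta>W\<^sub>n\<^sup>2 = h\<close> turns the step into an affine recurrence for \<open>E x\<^sub>n\<close>. For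
  \<open>0 < h < 8 / (2 + \<eta>\<^sup>2)\<^sup>2\<close> its factor lies in \<open>(-1, 1)\<close>, so \<open>E x\<^sub>n\<close> converges to the fixed point,
  which is \<open>h\<close> times a function bounded near \<open>h = 0\<close>.\<close>

lemma deriv_heun_g: "deriv (heun_g eta) x = eta"
  unfolding heun_g_def by (rule DERIV_imp_deriv) (auto intro!: derivative_eq_intros)

lemma heun_step_quadratic:
  "heun_step eta h x w =
     (- eta/2 * (h - (1 + eta^2/2) * h^2/2) + (1 - (1 + eta^2/2) * h + (1 + eta^2/2)^2 * h^2/2) * x)
     + (1 - (1 + eta^2/2) * h/2 - eta^2 * h/4 + eta * (1 - (1 + eta^2/2) * h) * x) * w
     + (eta/2 + eta^2/2 * x) * w^2"
  unfolding heun_step_def heun_F_def heun_f_def deriv_heun_g Let_def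
  by (simp add: heun_g_def power2_eq_square field_simps)

lemma heun_iter_cong:
  "(\<And>i. i < n \<Longrightarrow> dW i \<omega> = dW' i \<omega>') \<Longrightarrow>
   heun_iter eta h x0 dW n \<omega> = heun_iter eta h x0 dW' n \<omega>'"
  by (induction n) auto

lemma heun_iter_measurable:
  "(\<And>i. i < n \<Longrightarrow> dW i \<in> borel_measurable N) \<Longrightarrow> heun_iter eta h x0 dW n \<in> borel_measurable N"
proof (induction n)
  case 0
  then show ?case by simp
next
  case (Suc n)
  then have [measurable]: "heun_iter eta h x0 dW n \<in> borel_measurable N" "dW n \<in> borel_measurable N"
    by auto
  show ?case by (simp add: heun_step_quadratic) measurable
qed

lemma affine_recurrence_tendsto:
  fixes mu :: "nat \<Rightarrow> real"
  assumes rec: "\<And>n. mu (Suc n) = r * mu n + c" and r: "\<bar>r\<bar> < 1"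
  shows "mu \<longlonglongrightarrow> c / (1 - r)"
proof -
  define L where "L = c / (1 - r)"
  define m0 where "m0 = mu 0"
  have fixpoint: "L = r * L + c"
    using r by (simp add: L_def field_simps)
  have closed_form: "mu n = L + r ^ n * (m0 - L)" for n
  proof (induction n)
    case 0
    then show ?case by (simp add: m0_def)
  next
    case (Suc n)
    have "mu (Suc n) = r * (L + r ^ n * (m0 - L)) + c"
      using rec Suc by simp
    also have "\<dots> = L + r ^ Suc n * (m0 - L)"
      using fixpoint by (simp add: algebra_simps)
    finally show ?case .
  qed
  have "(\<lambda>n. L + r ^ n * (m0 - L)) \<longlonglongrightarrow> L + 0 * (m0 - L)"
    using r by (intro tendsto_intros LIMSEQ_power_zero) simp
  moreover have "mu = (\<lambda>n. L + r ^ n * (m0 - L))"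
    using closed_form by (intro ext)
  ultimately show ?thesis
    by (simp add: L_def)
qed

lemma abs_heun_mean_factor_less_one:
  fixes h b :: real
  assumes "0 < h" "4 \<le> b" "h * b < 8"
  shows "\<bar>1 - h + 1/8 * h^2 * b\<bar> < 1"
proof -
  have "h * (1 - h * b / 8) \<le> h * (1 - h / 2)"
    using assms by (intro mult_left_mono) auto
  moreover have "h * (1 - h / 2) \<le> 1 / 2"
    using zero_le_power2 [of "h - 1"] by (simp add: power2_eq_square algebra_simps)
  moreover have "h * (1 - h * b / 8) > 0"
    using assms by simp
  moreover have "1 - h + 1/8 * h^2 * b = 1 - h * (1 - h * b / 8)"
    by (simp add: power2_eq_square algebra_simps)
  ultimately show ?thesis by linarith
qed

lemma bigo_linear_fraction_at_right_0:
  fixes a b :: real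
  shows "(\<lambda>k. a * k / (1 - b * k)) \<in> O[at_right 0](\<lambda>k. k)"
proof (rule bigoI_tendsto)
  have "((\<lambda>k. a / (1 - b * k)) \<longlongrightarrow> a / (1 - b * 0)) (at_right 0)"
    by (intro tendsto_intros) auto
  moreover have "eventually (\<lambda>k. a / (1 - b * k) = a * k / (1 - b * k) / k) (at_right (0::real))"
    by (auto simp: eventually_at_right_less[THEN eventually_mono])
  ultimately show "((\<lambda>k. a * k / (1 - b * k) / k) \<longlongrightarrow> a) (at_right 0)"
    by (simp add: tendsto_cong)
  show "eventually (\<lambda>k::real. k \<noteq> 0) (at_right 0)"
    by (simp add: eventually_at_right_less[THEN eventually_mono])
qed

lemma tendsto_heun_mean:
  fixes mu :: "nat \<Rightarrow> real"
  assumes "0 < h" and "h < 8 / (2 + eta^2)^2"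
    and recurrence: "\<And>n. mu (Suc n) = (1 - h + 1/8 * h^2 * (2 + eta^2)^2) * mu n
                                    + 1/8 * eta * h^2 * (2 + eta^2)"
  shows "mu \<longlonglongrightarrow> (1/8 * eta * h * (2 + eta^2)) / (1 - 1/8 * h * (2 + eta^2)^2)"
proof -
  let ?r = "1 - h + 1/8 * h^2 * (2 + eta^2)^2"
  let ?c = "1/8 * eta * h^2 * (2 + eta^2)"
  have four_le: "4 \<le> (2 + eta^2)^2"
    using power_mono[of 2 "2 + eta^2" 2] by simp
  then have "0 < (2 + eta^2)^2"
    by linarith
  with assms(2) have "h * (2 + eta^2)^2 < 8"
    by (simp add: pos_less_divide_eq)
  with recurrence have "mu \<longlonglongrightarrow> ?c / (1 - ?r)"
    by (intro affine_recurrence_tendsto abs_heun_mean_factor_less_one \<open>0 < h\<close> four_le)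
  also have "?c / (1 - ?r) = (h * (1/8 * eta * h * (2 + eta^2))) / (h * (1 - 1/8 * h * (2 + eta^2)^2))"
    by (simp add: algebra_simps power2_eq_square)
  also have "\<dots> = (1/8 * eta * h * (2 + eta^2)) / (1 - 1/8 * h * (2 + eta^2)^2)"
    using \<open>0 < h\<close> by simp
  finally show ?thesis .
qed

context prob_space
begin

lemma normal_distributed_moments:
  assumes "0 < \<sigma>" and D: "distributed M lborel W (normal_density 0 \<sigma>)"
  shows "integrable M (\<lambda>\<omega>. W \<omega> ^ k)"
    and "expectation W = 0"
    and "expectation (\<lambda>\<omega>. (W \<omega>)^2) = \<sigma>^2"
proof -
  show "integrable M (\<lambda>\<omega>. W \<omega> ^ k)"
    using distributed_integrable[OF D, of "\<lambda>x. x ^ k"]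
      integrable_normal_moment[where \<mu> = 0 and \<sigma> = \<sigma> and k = k] assms(1)
    by simp
  show mean: "expectation W = 0"
    using normal_distributed_expectation[OF assms] .
  show "expectation (\<lambda>\<omega>. (W \<omega>)^2) = \<sigma>^2"
    using normal_distributed_variance[OF assms] by (simp add: mean)
qed

lemma expectation_indep_affine_mult:
  fixes X Y :: "'a \<Rightarrow> real"
  assumes ind: "indep_var borel X borel Y" and "integrable M X" "integrable M Y"
  shows "integrable M (\<lambda>\<omega>. (a + b * X \<omega>) * Y \<omega>)"
    and "expectation (\<lambda>\<omega>. (a + b * X \<omega>) * Y \<omega>) = (a + b * expectation X) * expectation Y"
proof -
  have "indep_var borel ((\<lambda>x. a + b * x) \<circ> X) borel ((\<lambda>y. y) \<circ> Y)"
    by (rule indep_var_compose[OF ind]) auto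
  then have ind': "indep_var borel (\<lambda>\<omega>. a + b * X \<omega>) borel Y"
    by (simp add: comp_def)
  have "integrable M (\<lambda>\<omega>. a + b * X \<omega>)"
    using assms by auto
  with ind' assms show "integrable M (\<lambda>\<omega>. (a + b * X \<omega>) * Y \<omega>)"
    and "expectation (\<lambda>\<omega>. (a + b * X \<omega>) * Y \<omega>) = (a + b * expectation X) * expectation Y"
    by (simp_all add: indep_var_integrable indep_var_lebesgue_integral prob_space)
qed

lemma indep_var_heun_iter_increment:
  assumes ind: "indep_vars (\<lambda>_. borel) dW UNIV"
  shows "indep_var borel (heun_iter eta h x0 dW n) borel (dW n)"
proof -
  let ?past = "\<lambda>\<omega>. restrict (\<lambda>i. dW i \<omega>) {..<n}"
  let ?present = "\<lambda>\<omega>. restrict (\<lambda>i. dW i \<omega>) {n}"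
  have "indep_var (PiM {..<n} (\<lambda>_. borel)) ?past (PiM {n} (\<lambda>_. borel)) ?present"
    by (rule indep_var_restrict[OF ind]) auto
  then have "indep_var borel ((\<lambda>f. heun_iter eta h x0 (\<lambda>i f. f i) n f) \<circ> ?past)
      borel ((\<lambda>f. f n) \<circ> ?present)"
    by (rule indep_var_compose) (auto intro!: heun_iter_measurable measurable_component_singleton)
  moreover have "(\<lambda>f. heun_iter eta h x0 (\<lambda>i f. f i) n f) \<circ> ?past = heun_iter eta h x0 dW n"
    by (rule ext) (simp add: comp_def, rule heun_iter_cong, simp)
  moreover have "(\<lambda>f. f n) \<circ> ?present = dW n"
    by (rule ext) simp
  ultimately show ?thesis by simp
qed

lemma expectation_heun_step:
  assumes "0 < h" and ind: "indep_var borel X borel W" and X: "integrable M X"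
    and D: "distributed M lborel W (normal_density 0 (sqrt h))"
  shows "integrable M (\<lambda>\<omega>. heun_step eta h (X \<omega>) (W \<omega>))"
    and "expectation (\<lambda>\<omega>. heun_step eta h (X \<omega>) (W \<omega>))
           = (1 - h + 1/8 * h^2 * (2 + eta^2)^2) * expectation X + 1/8 * eta * h^2 * (2 + eta^2)"
proof -
  define p0 where "p0 = - eta/2 * (h - (1 + eta^2/2) * h^2/2)"
  define p1 where "p1 = 1 - (1 + eta^2/2) * h + (1 + eta^2/2)^2 * h^2/2"
  define q0 where "q0 = 1 - (1 + eta^2/2) * h/2 - eta^2 * h/4"
  define q1 where "q1 = eta * (1 - (1 + eta^2/2) * h)"
  define r0 where "r0 = eta/2"
  define r1 where "r1 = eta^2/2"
  have step: "(\<lambda>\<omega>. heun_step eta h (X \<omega>) (W \<omega>)) = (\<lambda>\<omega>.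
      (p0 + p1 * X \<omega>) + (q0 + q1 * X \<omega>) * W \<omega> + (r0 + r1 * X \<omega>) * (W \<omega>)^2)"
    unfolding p0_def p1_def q0_def q1_def r0_def r1_def heun_step_quadratic ..
  have "0 < sqrt h"
    using \<open>0 < h\<close> by simp
  note W = normal_distributed_moments[OF this D]
  have ind_square: "indep_var borel X borel (\<lambda>\<omega>. (W \<omega>)^2)"
    using indep_var_compose[OF ind, of "\<lambda>x. x" borel "\<lambda>w. w^2" borel] by (simp add: comp_def)
  have "integrable M W"
    using W(1)[of 1] by simp
  note linear = expectation_indep_affine_mult[OF ind X this, where a = q0 and b = q1]
  note quadratic = expectation_indep_affine_mult[OF ind_square X W(1)[of 2], where a = r0 and b = r1]
  have "integrable M (\<lambda>\<omega>. p0 + p1 * X \<omega>)"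
    using X by simp
  with linear quadratic show "integrable M (\<lambda>\<omega>. heun_step eta h (X \<omega>) (W \<omega>))"
    unfolding step by simp
  have "expectation (\<lambda>\<omega>. heun_step eta h (X \<omega>) (W \<omega>))
      = p0 + p1 * expectation X + (r0 + r1 * expectation X) * h"
    using X linear quadratic W(2,3) \<open>0 < h\<close> \<open>integrable M (\<lambda>\<omega>. p0 + p1 * X \<omega>)\<close>
    unfolding step by (simp add: prob_space)
  also have "\<dots> = (1 - h + 1/8 * h^2 * (2 + eta^2)^2) * expectation X + 1/8 * eta * h^2 * (2 + eta^2)"
    unfolding p0_def p1_def r0_def r1_def by (simp add: power2_eq_square field_simps)
  finally show "expectation (\<lambda>\<omega>. heun_step eta h (X \<omega>) (W \<omega>))
      = (1 - h + 1/8 * h^2 * (2 + eta^2)^2) * expectation X + 1/8 * eta * h^2 * (2 + eta^2)" .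
qed

context
  fixes h :: real and dW :: "nat \<Rightarrow> 'a \<Rightarrow> real"
  assumes h: "0 < h"
    and ind: "indep_vars (\<lambda>_. borel) dW UNIV"
    and D: "\<And>n. distributed M lborel (dW n) (normal_density 0 (sqrt h))"
begin

lemma heun_iter_Suc_fun:
  "heun_iter eta h x0 dW (Suc n) = (\<lambda>\<omega>. heun_step eta h (heun_iter eta h x0 dW n \<omega>) (dW n \<omega>))"
  by (rule ext) simp

lemma integrable_heun_iter: "integrable M (heun_iter eta h x0 dW n)"
proof (induction n)
  case 0
  then show ?case by simp
next
  case (Suc n)
  then show ?case
    unfolding heun_iter_Suc_fun
    by (rule expectation_heun_step(1)[OF h indep_var_heun_iter_increment[OF ind] _ D])
qed

lemma expectation_heun_iter_Suc:
  "expectation (heun_iter eta h x0 dW (Suc n))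
     = (1 - h + 1/8 * h^2 * (2 + eta^2)^2) * expectation (heun_iter eta h x0 dW n)
       + 1/8 * eta * h^2 * (2 + eta^2)"
  unfolding heun_iter_Suc_fun
  by (rule expectation_heun_step(2)[OF h indep_var_heun_iter_increment[OF ind] integrable_heun_iter D])

end

end

theorem mainTheorem6:
  fixes M :: "'a measure" and eta h x0 :: real and dW :: "nat \<Rightarrow> 'a \<Rightarrow> real"
  assumes "prob_space M"
    and "h > 0"
    and "prob_space.indep_vars M (\<lambda>_. borel) dW UNIV"
    and "\<And>n. distributed M lborel (dW n) (\<lambda>x. ennreal (normal_density 0 (sqrt h) x))"
  shows "(\<forall>n. prob_space.expectation M (heun_iter eta h x0 dW (Suc n))
            = (1 - h + 1/8 * h^2 * (2 + eta^2)^2) * prob_space.expectation M (heun_iter eta h x0 dW n)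
              + 1/8 * eta * h^2 * (2 + eta^2))
       \<and> (h < 8 / (2 + eta^2)^2 \<longrightarrow>
            (\<lambda>n. prob_space.expectation M (heun_iter eta h x0 dW n))
              \<longlonglongrightarrow> (1/8 * eta * h * (2 + eta^2)) / (1 - 1/8 * h * (2 + eta^2)^2))
       \<and> (\<lambda>k::real. (1/8 * eta * k * (2 + eta^2)) / (1 - 1/8 * k * (2 + eta^2)^2))
            \<in> O[at_right 0](\<lambda>k. k)"
proof -
  interpret prob_space M by fact
  note recurrence = expectation_heun_iter_Suc[OF assms(2-4), of eta x0]
  moreover have "h < 8 / (2 + eta^2)^2 \<longrightarrow> (\<lambda>n. expectation (heun_iter eta h x0 dW n))
      \<longlonglongrightarrow> (1/8 * eta * h * (2 + eta^2)) / (1 - 1/8 * h * (2 + eta^2)^2)"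
    using tendsto_heun_mean[where mu = "\<lambda>n. expectation (heun_iter eta h x0 dW n)", OF assms(2) _ recurrence]
    by blast
  moreover have "(\<lambda>k::real. (1/8 * eta * k * (2 + eta^2)) / (1 - 1/8 * k * (2 + eta^2)^2))
      \<in> O[at_right 0](\<lambda>k. k)"
    using bigo_linear_fraction_at_right_0[of "1/8 * eta * (2 + eta^2)" "1/8 * (2 + eta^2)^2"]
    by (simp add: mult_ac)
  ultimately show ?thesis
    by blast
qed

end
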